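(* Let $M$ be any matroid that is representable over $\mathbb{Q}$. Then there exists an integer $N\ge 1$ such that $M$ is isomorphic to a minor of the matroid $M(\mathcal{A}_N)$ underlying the resonance arrangement $\mathcal{A}_N$. Equivalently, every hyperplane arrangement $\mathcal{B}$ defined over $\mathbb{Q}$ arises (up to isomorphism of the underlying matroids) from $\mathcal{A}_N$, for some large enough $N$, by a finite sequence of restriction and contraction steps.
   Context: For $n\ge1$, the resonance arrangement $\mathcal{A}_n$ is the arrangement in $\mathbb{R}^n$ (or $\mathbb{Q}^n$) consisting of the hyperplanes $H_I=\{x:\sum_{i\in I}x_i=0\}$ for all nonempty $I\subseteq[n]$; equivalently its normal vectors are all nonzero $0/1$-vectors $\chi_I$ in $\mathbb{R}^n$. The matroid $M(\mathcal{A}_n)$ has ground set $\mathcal{A}_n$ and a subset is independent iff the corresponding normal vectors $\chi_I$ are linearly independent. A matroid is representable over $\mathbb{Q}$ if it equals the matroid of linearly independent column subsets of some matrix over $\mathbb{Q}$; a matroid of an arrangement is the matroid of its normal vectors. For a matroid $M=(E,\mathcal{I})$ and $S\subseteq E$: the restriction $M|S$ has ground set $S$ and independent sets $\{I\in\mathcal{I}: I\subseteq S\}$; if $S$ is independent, the contraction $M/S$ has ground set $E\setminus S$ and independent sets $\{I\subseteq E\setminus S: I\cup S\in\mathcal{I}\}$. A minor of $M$ is any matroid obtained from $M$ by a finite sequence of restrictions and contractions. *)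

theory Defs
  imports Complex_Main
begin

type_synonym 'a matroid = "'a set \<times> ('a set \<Rightarrow> bool)"

text \<open>Linear independence over Q of the family (v e) for e in S (as a family, so
  repeated vectors are dependent). Vectors in Q^m are functions nat => rat.\<close>
definition lin_indep_fam :: "('a \<Rightarrow> nat \<Rightarrow> rat) \<Rightarrow> 'a set \<Rightarrow> bool" where
  "lin_indep_fam v S \<longleftrightarrow> finite S \<and>
     (\<forall>c :: 'a \<Rightarrow> rat. (\<forall>i. (\<Sum>e\<in>S. c e * v e i) = 0) \<longrightarrow> (\<forall>e\<in>S. c e = 0))"

definition representable_Q :: "'a matroid \<Rightarrow> bool" where
  "representable_Q M \<longleftrightarrow> finite (fst M) \<and>
     (\<exists>(v :: 'a \<Rightarrow> nat \<Rightarrow> rat) (m :: nat).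
        (\<forall>e\<in>fst M. \<forall>i. m \<le> i \<longrightarrow> v e i = 0) \<and>
        (\<forall>S. snd M S \<longleftrightarrow> S \<subseteq> fst M \<and> lin_indep_fam v S))"

definition chi :: "nat set \<Rightarrow> nat \<Rightarrow> rat" where
  "chi I i = (if i \<in> I then 1 else 0)"

text \<open>The matroid of the resonance arrangement A_n: hyperplanes H_I are identified
  with nonempty I subseteq {1..n}; normal vector chi I.\<close>
definition resonance_matroid :: "nat \<Rightarrow> nat set matroid" where
  "resonance_matroid n =
     ({I. I \<subseteq> {1..n} \<and> I \<noteq> {}},
      \<lambda>S. S \<subseteq> {I. I \<subseteq> {1..n} \<and> I \<noteq> {}} \<and> lin_indep_fam chi S)"

definition restriction :: "'a matroid \<Rightarrow> 'a set \<Rightarrow> 'a matroid" where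
  "restriction M S = (S, \<lambda>I. snd M I \<and> I \<subseteq> S)"

definition contraction :: "'a matroid \<Rightarrow> 'a set \<Rightarrow> 'a matroid" where
  "contraction M S = (fst M - S, \<lambda>I. I \<subseteq> fst M - S \<and> snd M (I \<union> S))"

inductive is_minor :: "'a matroid \<Rightarrow> 'a matroid \<Rightarrow> bool" where
  self: "is_minor M M"
| restr: "is_minor N M \<Longrightarrow> S \<subseteq> fst N \<Longrightarrow> is_minor (restriction N S) M"
| contr: "is_minor N M \<Longrightarrow> snd N S \<Longrightarrow> is_minor (contraction N S) M"

definition matroid_iso :: "'a matroid \<Rightarrow> 'b matroid \<Rightarrow> bool" where
  "matroid_iso M M' \<longleftrightarrow> (\<exists>f. bij_betw f (fst M) (fst M') \<and>
      (\<forall>S. S \<subseteq> fst M \<longrightarrow> (snd M S \<longleftrightarrow> snd M' (f ` S))))"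

end

theory Submission
  imports Defs "HOL-Library.Countable"
begin

text \<open>Scale the representing vectors to integer vectors w e in Z^m with entries bounded by K.
  Take coordinates Row i (i < m), Pos i k and Neg i k (k < K), and Tag j, Tag' j for every
  element, and send e to the hyperplane with support
  {Tag e, Tag' e} \<union> {Pos i k | k < w e i} \<union> {Neg i k | k < - w e i}.
  Now contract the hyperplanes with supports {Tag j}, {Tag' j}, {Pos i k, Row i} and
  {Neg i k, Pos i k}. They are independent, and on the coordinates in play they span exactly
  the kernel of the linear map
  L x i = (\<Sum>k. x (Pos i k)) - (\<Sum>k. x (Neg i k)) - x (Row i),
  which sends the hyperplane of e to w e. Hence, after the contraction, the hyperplanes of the
  elements have the matroid of the vectors w e, which is the matroid of the original ones.\<close>

lemma lin_indep_fam_cong: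
  assumes "\<And>e i. e \<in> T \<Longrightarrow> v e i = w e i"
  shows "lin_indep_fam v T \<longleftrightarrow> lin_indep_fam w T"
  using assms by (simp add: lin_indep_fam_def cong: sum.cong)

lemma lin_indep_fam_scale:
  assumes d: "\<And>e. e \<in> T \<Longrightarrow> d e \<noteq> 0"
  shows "lin_indep_fam (\<lambda>e i. d e * v e i) T \<longleftrightarrow> lin_indep_fam v T"
proof -
  have scaled: "(\<Sum>e\<in>T. c e * (d e * v e i)) = (\<Sum>e\<in>T. (c e * d e) * v e i)" for c i
    by (simp add: mult.assoc)
  have unscaled: "(\<Sum>e\<in>T. c e * v e i) = (\<Sum>e\<in>T. (c e / d e) * (d e * v e i))" for c i
    using d by (intro sum.cong) simp_all
  show ?thesis
    unfolding lin_indep_fam_def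
  proof (intro iffI conjI allI impI; elim conjE)
    fix c assume indep: "\<forall>c. (\<forall>i. (\<Sum>e\<in>T. c e * (d e * v e i)) = 0) \<longrightarrow> (\<forall>e\<in>T. c e = 0)"
      and "\<forall>i. (\<Sum>e\<in>T. c e * v e i) = 0"
    then have "\<forall>e\<in>T. c e / d e = 0"
      unfolding unscaled using indep[rule_format, of "\<lambda>e. c e / d e"] by blast
    then show "\<forall>e\<in>T. c e = 0" using d by simp
  next
    fix c assume indep: "\<forall>c. (\<forall>i. (\<Sum>e\<in>T. c e * v e i) = 0) \<longrightarrow> (\<forall>e\<in>T. c e = 0)"
      and "\<forall>i. (\<Sum>e\<in>T. c e * (d e * v e i)) = 0"
    then have "\<forall>e\<in>T. c e * d e = 0"
      unfolding scaled using indep[rule_format, of "\<lambda>e. c e * d e"] by blast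
    then show "\<forall>e\<in>T. c e = 0" using d by simp
  qed
qed

lemma lin_indep_fam_image:
  assumes f: "inj_on f T"
  shows "lin_indep_fam v (f ` T) \<longleftrightarrow> lin_indep_fam (\<lambda>t. v (f t)) T"
proof -
  have reindex: "(\<Sum>A\<in>f ` T. c A * v A i) = (\<Sum>t\<in>T. c (f t) * v (f t) i)" for c i
    using f by (simp add: sum.reindex)
  show ?thesis
    unfolding lin_indep_fam_def finite_image_iff[OF f]
  proof (intro iffI conjI allI impI; elim conjE)
    fix c assume indep: "\<forall>c. (\<forall>i. (\<Sum>A\<in>f ` T. c A * v A i) = 0) \<longrightarrow> (\<forall>A\<in>f ` T. c A = 0)"
      and "\<forall>i. (\<Sum>t\<in>T. c t * v (f t) i) = 0"
    moreover have "(\<Sum>t\<in>T. c (inv_into T f (f t)) * v (f t) i) = (\<Sum>t\<in>T. c t * v (f t) i)" for i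
      using f by (intro sum.cong) simp_all
    ultimately have "\<forall>A\<in>f ` T. c (inv_into T f A) = 0"
      using indep[rule_format, of "\<lambda>A. c (inv_into T f A)"] by (simp add: reindex)
    then show "\<forall>t\<in>T. c t = 0" using f by simp
  next
    fix c assume indep: "\<forall>c. (\<forall>i. (\<Sum>t\<in>T. c t * v (f t) i) = 0) \<longrightarrow> (\<forall>t\<in>T. c t = 0)"
      and "\<forall>i. (\<Sum>A\<in>f ` T. c A * v A i) = 0"
    then show "\<forall>A\<in>f ` T. c A = 0"
      unfolding reindex using indep[rule_format, of "\<lambda>t. c (f t)"] by blast
  qed
qed

text \<open>Contracting an independent set S whose span is exactly the part of the kernel of a
  linear map L that the vectors of T can reach: afterwards T is represented by its image under L.\<close>
lemma lin_indep_fam_union_iff_image: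
  fixes v :: "'a \<Rightarrow> nat \<Rightarrow> rat" and L :: "(nat \<Rightarrow> rat) \<Rightarrow> nat \<Rightarrow> rat"
  assumes fin: "finite T" "finite S" and disj: "T \<inter> S = {}"
    and S: "lin_indep_fam v S"
    and L_sum: "\<And>(F :: 'a set) b f i. finite F \<Longrightarrow> L (\<lambda>j. \<Sum>t\<in>F. b t * f t j) i = (\<Sum>t\<in>F. b t * L (f t) i)"
    and L_S: "\<And>s i. s \<in> S \<Longrightarrow> L (v s) i = 0"
    and kernel: "\<And>c. (\<And>i. L (\<lambda>j. \<Sum>t\<in>T. c t * v t j) i = 0) \<Longrightarrow>
                  \<exists>a. \<forall>j. (\<Sum>t\<in>T. c t * v t j) = (\<Sum>s\<in>S. a s * v s j)"
  shows "lin_indep_fam v (T \<union> S) \<longleftrightarrow> lin_indep_fam (\<lambda>t. L (v t)) T"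
proof
  assume indep: "lin_indep_fam v (T \<union> S)"
  show "lin_indep_fam (\<lambda>t. L (v t)) T"
    unfolding lin_indep_fam_def
  proof (intro conjI fin allI impI)
    fix c assume "\<forall>i. (\<Sum>t\<in>T. c t * L (v t) i) = 0"
    then have "L (\<lambda>j. \<Sum>t\<in>T. c t * v t j) i = 0" for i
      using L_sum[OF fin(1)] by simp
    then obtain a where a: "\<And>j. (\<Sum>t\<in>T. c t * v t j) = (\<Sum>s\<in>S. a s * v s j)"
      using kernel by blast
    define b where "b t = (if t \<in> T then c t else - a t)" for t
    have "(\<Sum>t\<in>T \<union> S. b t * v t j) = (\<Sum>t\<in>T. c t * v t j) - (\<Sum>s\<in>S. a s * v s j)" for j
    proof -
      have "(\<Sum>s\<in>S. b s * v s j) = (\<Sum>s\<in>S. - (a s * v s j))"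
        using disj by (intro sum.cong) (auto simp: b_def)
      then show ?thesis
        using fin disj by (simp add: sum.union_disjoint sum_negf b_def)
    qed
    then have "\<forall>t\<in>T \<union> S. b t = 0"
      using indep a unfolding lin_indep_fam_def by simp
    then show "\<forall>t\<in>T. c t = 0" by (metis UnCI b_def)
  qed
next
  assume indep: "lin_indep_fam (\<lambda>t. L (v t)) T"
  show "lin_indep_fam v (T \<union> S)"
    unfolding lin_indep_fam_def
  proof (intro conjI allI impI)
    show "finite (T \<union> S)" using fin by simp
  next
    fix b assume "\<forall>j. (\<Sum>t\<in>T \<union> S. b t * v t j) = 0"
    then have split: "(\<Sum>t\<in>T. b t * v t j) + (\<Sum>s\<in>S. b s * v s j) = 0" for j
      using fin disj by (simp add: sum.union_disjoint)
    have "(\<Sum>t\<in>T. b t * L (v t) i) = 0" for i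
    proof -
      have "(\<Sum>t\<in>T. b t * L (v t) i) = (\<Sum>t\<in>T \<union> S. b t * L (v t) i)"
        using fin disj L_S by (simp add: sum.union_disjoint)
      also have "\<dots> = L (\<lambda>j. \<Sum>t\<in>T \<union> S. b t * v t j) i"
        using fin by (simp add: L_sum)
      also have "\<dots> = L (\<lambda>j. \<Sum>t\<in>{}. b t * v t j) i"
        using \<open>\<forall>j. _ = 0\<close> by simp
      also have "\<dots> = 0"
        by (subst L_sum) simp_all
      finally show ?thesis .
    qed
    then have T0: "\<forall>t\<in>T. b t = 0"
      using indep unfolding lin_indep_fam_def by blast
    then have "\<forall>j. (\<Sum>s\<in>S. b s * v s j) = 0" using split by simp
    then have "\<forall>s\<in>S. b s = 0" using S unfolding lin_indep_fam_def by blast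
    with T0 show "\<forall>t\<in>T \<union> S. b t = 0" by blast
  qed
qed

lemma rat_common_denominator:
  fixes Q :: "rat set"
  assumes "finite Q"
  shows "\<exists>d::int. d > 0 \<and> (\<forall>q\<in>Q. of_int d * q \<in> \<int>)"
  using assms
proof (induction Q rule: finite_induct)
  case empty
  show ?case by (intro exI[of _ 1]) simp
next
  case (insert q Q)
  then obtain d where d: "d > 0" "\<forall>r\<in>Q. of_int d * r \<in> \<int>" by blast
  obtain n e where q: "quotient_of q = (n, e)" by (cases "quotient_of q")
  have "e > 0" using quotient_of_denom_pos[OF q] .
  have "of_int e * q = of_int n"
    using quotient_of_div[OF q] \<open>e > 0\<close> by simp
  then have "of_int (d * e) * q = of_int (d * n)"
    by (metis mult.assoc of_int_mult)
  then have "of_int (d * e) * q \<in> \<int>"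
    by (metis Ints_of_int)
  moreover have "of_int (d * e) * r \<in> \<int>" if "r \<in> Q" for r
  proof -
    have "of_int (d * e) * r = of_int e * (of_int d * r)" by simp
    also have "\<dots> \<in> \<int>" using d(2) that Ints_mult[OF Ints_of_int] by blast
    finally show ?thesis .
  qed
  ultimately have "\<forall>r\<in>insert q Q. of_int (d * e) * r \<in> \<int>" by simp
  with d(1) \<open>e > 0\<close> show ?case by (intro exI[of _ "d * e"]) simp
qed

lemma rational_vectors_integral_multiple:
  fixes v :: "'a \<Rightarrow> nat \<Rightarrow> rat"
  assumes "finite E" and zero: "\<And>e i. e \<in> E \<Longrightarrow> m \<le> i \<Longrightarrow> v e i = 0"
  obtains d :: rat and W :: "'a \<Rightarrow> nat \<Rightarrow> int"
  where "d \<noteq> 0" "\<And>e i. e \<in> E \<Longrightarrow> of_int (W e i) = d * v e i"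
proof -
  have "finite ((\<lambda>(e, i). v e i) ` (E \<times> {..<m}))" using \<open>finite E\<close> by simp
  then obtain d :: int where d: "d > 0" "\<forall>q\<in>(\<lambda>(e, i). v e i) ` (E \<times> {..<m}). of_int d * q \<in> \<int>"
    using rat_common_denominator by blast
  have "of_int \<lfloor>of_int d * v e i\<rfloor> = of_int d * v e i" if "e \<in> E" for e i
  proof -
    have "of_int d * v e i \<in> \<int>"
    proof (cases "i < m")
      case True
      then have "v e i \<in> (\<lambda>(e, i). v e i) ` (E \<times> {..<m})"
        using that by (intro image_eqI[of _ _ "(e, i)"]) simp_all
      then show ?thesis using d(2) by blast
    qed (use zero[OF that] in simp)
    then show ?thesis by (elim Ints_cases) simp
  qed
  moreover have "(of_int d :: rat) \<noteq> 0" using d(1) by simp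
  ultimately show ?thesis using that[of "of_int d" "\<lambda>e i. \<lfloor>of_int d * v e i\<rfloor>"] by blast
qed

lemma sum_lessThan_indicator:
  assumes "a \<le> K"
  shows "(\<Sum>k<K. if k < a then 1 else 0 :: rat) = of_nat a"
proof -
  have "(\<Sum>k<K. if k < a then 1 else 0 :: rat) = (\<Sum>k\<in>{k. k < K \<and> k < a}. 1)"
    by (simp add: sum.If_cases Int_def lessThan_def)
  also have "{k. k < K \<and> k < a} = {..<a}" using assms by auto
  finally show ?thesis by simp
qed

lemma is_minor_restriction_contraction:
  assumes "snd M S" and "X \<subseteq> fst M - S"
  shows "is_minor (restriction (contraction M S) X) M"
  using assms by (intro is_minor.restr is_minor.contr is_minor.self) (simp_all add: contraction_def)

datatype coord = Row nat | Pos nat nat | Neg nat nat | Tag nat | Tag' nat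

instance coord :: countable by countable_datatype

text \<open>Coordinates of the resonance arrangement are numbered from 1.\<close>
definition code :: "coord \<Rightarrow> nat" where "code c = Suc (to_nat c)"

lemma code_eq_iff: "code c = code c' \<longleftrightarrow> c = c'"
  by (simp add: code_def)

lemma inj_code: "inj code"
  by (simp add: inj_def code_eq_iff)

lemma chi_code_image: "chi (code ` A) (code c) = (if c \<in> A then 1 else 0)"
  by (simp add: chi_def inj_image_mem_iff[OF inj_code])

fun contr_coords :: "coord \<Rightarrow> coord set" where
  "contr_coords (Row i) = {Row i}"
| "contr_coords (Pos i k) = {Pos i k, Row i}"
| "contr_coords (Neg i k) = {Neg i k, Pos i k}"
| "contr_coords (Tag j) = {Tag j}"
| "contr_coords (Tag' j) = {Tag' j}"

definition contr_hyp :: "coord \<Rightarrow> nat set" where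
  "contr_hyp c = code ` contr_coords c"

lemma inj_contr_hyp: "inj contr_hyp"
proof -
  have "inj contr_coords"
    unfolding inj_def by (intro allI impI) (case_tac x; case_tac y; auto simp: doubleton_eq_iff)
  then show ?thesis
    unfolding contr_hyp_def inj_def by (metis inj_image_eq_iff inj_code injD)
qed

locale integral_configuration =
  fixes E :: "'a set" and idx :: "'a \<Rightarrow> nat" and W :: "'a \<Rightarrow> nat \<Rightarrow> int" and m K :: nat
  assumes finite_E: "finite E" and inj_idx: "inj_on idx E"
    and W_bound: "\<And>e i. e \<in> E \<Longrightarrow> \<bar>W e i\<bar> \<le> int K"
    and W_zero: "\<And>e i. e \<in> E \<Longrightarrow> m \<le> i \<Longrightarrow> W e i = 0"
begin

definition w :: "'a \<Rightarrow> nat \<Rightarrow> rat" where "w e i = of_int (W e i)"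

definition elem_coords :: "'a \<Rightarrow> coord set" where
  "elem_coords e = {Tag (idx e), Tag' (idx e)} \<union> {Pos i k | i k. i < m \<and> k < nat (W e i)}
     \<union> {Neg i k | i k. i < m \<and> k < nat (- W e i)}"

definition elem_hyp :: "'a \<Rightarrow> nat set" where "elem_hyp e = code ` elem_coords e"

definition contr_labels :: "coord set" where
  "contr_labels = Tag ` idx ` E \<union> Tag' ` idx ` E \<union> {Pos i k | i k. i < m \<and> k < K}
     \<union> {Neg i k | i k. i < m \<and> k < K}"

definition L :: "(nat \<Rightarrow> rat) \<Rightarrow> nat \<Rightarrow> rat" where
  "L x i = (\<Sum>k<K. x (code (Pos i k))) - (\<Sum>k<K. x (code (Neg i k))) - x (code (Row i))"

lemma finite_contr_labels: "finite contr_labels"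
proof -
  have "{Pos i k | i k. i < m \<and> k < K} = (\<lambda>(i, k). Pos i k) ` ({..<m} \<times> {..<K})"
    and "{Neg i k | i k. i < m \<and> k < K} = (\<lambda>(i, k). Neg i k) ` ({..<m} \<times> {..<K})"
    by auto
  then show ?thesis unfolding contr_labels_def using finite_E by simp
qed

lemma elem_coords_subset:
  assumes e: "e \<in> E"
  shows "elem_coords e \<subseteq> contr_labels"
proof -
  have "nat (W e i) \<le> K" "nat (- W e i) \<le> K" for i
    using W_bound[OF e, of i] by auto
  then show ?thesis
    unfolding elem_coords_def contr_labels_def using e by (auto; meson order_less_le_trans)
qed

lemma contr_coords_subset: "c \<in> contr_labels \<Longrightarrow> contr_coords c \<subseteq> contr_labels \<union> Row ` {..<m}"
  by (cases c) (auto simp: contr_labels_def)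

lemma L_sum: "L (\<lambda>j. \<Sum>t\<in>F. b t * f t j) i = (\<Sum>t\<in>F. b t * L (f t) i)"
  unfolding L_def
  by (simp add: sum.swap[of _ F] sum_distrib_left right_diff_distrib sum_subtractf)

lemma L_elem_hyp: "e \<in> E \<Longrightarrow> L (chi (elem_hyp e)) i = w e i"
proof -
  assume e: "e \<in> E"
  have pos: "(\<Sum>k<K. chi (elem_hyp e) (code (Pos i k))) =
      (\<Sum>k<K. if k < (if i < m then nat (W e i) else 0) then 1 else 0)"
    unfolding elem_hyp_def chi_code_image by (intro sum.cong) (auto simp: elem_coords_def)
  have neg: "(\<Sum>k<K. chi (elem_hyp e) (code (Neg i k))) =
      (\<Sum>k<K. if k < (if i < m then nat (- W e i) else 0) then 1 else 0)"
    unfolding elem_hyp_def chi_code_image by (intro sum.cong) (auto simp: elem_coords_def)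
  have row: "chi (elem_hyp e) (code (Row i)) = 0"
    unfolding elem_hyp_def chi_code_image by (auto simp: elem_coords_def)
  show ?thesis
    unfolding L_def pos neg row w_def
    using W_bound[OF e, of i] W_zero[OF e, of i]
    by (cases "i < m") (simp_all add: sum_lessThan_indicator)
qed

lemma L_contr_hyp: "c \<in> contr_labels \<Longrightarrow> L (chi (contr_hyp c)) i = 0"
proof -
  assume c: "c \<in> contr_labels"
  have count: "(\<Sum>k<K. chi (contr_hyp c) (code (f i k))) = (\<Sum>k\<in>{k. k < K \<and> f i k \<in> contr_coords c}. 1)"
    for f
    unfolding contr_hyp_def chi_code_image by (simp add: sum.If_cases Int_def lessThan_def)
  show ?thesis
  proof (cases c)
    case (Pos a b)
    then have "{k. k < K \<and> Pos i k \<in> contr_coords c} = (if i = a then {b} else {})"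
      "{k. k < K \<and> Neg i k \<in> contr_coords c} = {}"
      using c by (auto simp: contr_labels_def)
    then show ?thesis
      unfolding L_def count using Pos by (simp add: contr_hyp_def chi_def code_eq_iff)
  next
    case (Neg a b)
    then have "{k. k < K \<and> Pos i k \<in> contr_coords c} = (if i = a then {b} else {})"
      "{k. k < K \<and> Neg i k \<in> contr_coords c} = (if i = a then {b} else {})"
      using c by (auto simp: contr_labels_def)
    then show ?thesis
      unfolding L_def count using Neg by (simp add: contr_hyp_def chi_def code_eq_iff)
  qed (use c in \<open>auto simp: L_def count contr_hyp_def chi_def code_eq_iff
    contr_labels_def\<close>)
qed

lemma sum_contr_hyp:
  "(\<Sum>c\<in>contr_labels. a c * chi (contr_hyp c) (code c0)) = (\<Sum>c\<in>{c\<in>contr_labels. c0 \<in> contr_coords c}. a c)"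
  unfolding contr_hyp_def chi_code_image
  by (simp add: sum.inter_filter[OF finite_contr_labels] if_distrib cong: if_cong)

lemma contr_labels_containing:
  "{c\<in>contr_labels. Tag j \<in> contr_coords c} = (if j \<in> idx ` E then {Tag j} else {})"
  "{c\<in>contr_labels. Tag' j \<in> contr_coords c} = (if j \<in> idx ` E then {Tag' j} else {})"
  "{c\<in>contr_labels. Neg i k \<in> contr_coords c} = (if i < m \<and> k < K then {Neg i k} else {})"
  "{c\<in>contr_labels. Pos i k \<in> contr_coords c} = (if i < m \<and> k < K then {Pos i k, Neg i k} else {})"
  "{c\<in>contr_labels. Row i \<in> contr_coords c} = (if i < m then Pos i ` {..<K} else {})"
  by (rule set_eqI; case_tac x; auto simp: contr_labels_def)+

text \<open>Each coordinate Tag j, Tag' j, Neg i k meets a single contracted hyperplane, and Pos i k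
  meets only two of them, one being that of Neg i k.\<close>
lemma contr_hyp_coeffs_zero:
  assumes comb: "\<And>j. (\<Sum>c\<in>contr_labels. a c * chi (contr_hyp c) j) = 0" and c: "c \<in> contr_labels"
  shows "a c = 0"
proof -
  have neg: "a (Neg i k) = 0" if "i < m" "k < K" for i k
    using comb[of "code (Neg i k)"] that unfolding sum_contr_hyp contr_labels_containing by simp
  have pos: "a (Pos i k) = 0" if "i < m" "k < K" for i k
    using comb[of "code (Pos i k)"] that neg[OF that]
    unfolding sum_contr_hyp contr_labels_containing by simp
  have "a (Tag j) = 0" "a (Tag' j) = 0" if "j \<in> idx ` E" for j
    using comb[of "code (Tag j)"] comb[of "code (Tag' j)"] that
    unfolding sum_contr_hyp contr_labels_containing by simp_all
  with neg pos c show ?thesis unfolding contr_labels_def by auto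
qed

lemma lin_indep_contr_hyps: "lin_indep_fam chi (contr_hyp ` contr_labels)"
  unfolding lin_indep_fam_image[OF inj_on_subset[OF inj_contr_hyp subset_UNIV]]
  using finite_contr_labels contr_hyp_coeffs_zero by (simp add: lin_indep_fam_def)

definition kernel_coeff :: "(nat \<Rightarrow> rat) \<Rightarrow> coord \<Rightarrow> rat" where
  "kernel_coeff x c = (case c of Pos i k \<Rightarrow> x (code (Pos i k)) - x (code (Neg i k)) | _ \<Rightarrow> x (code c))"

lemma kernel_in_span:
  assumes supp: "\<And>j. j \<notin> code ` (contr_labels \<union> Row ` {..<m}) \<Longrightarrow> x j = 0"
    and Lx: "\<And>i. i < m \<Longrightarrow> L x i = 0"
  shows "x j = (\<Sum>c\<in>contr_labels. kernel_coeff x c * chi (contr_hyp c) j)"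
proof (cases "j \<in> range code")
  case False
  then have "x j = 0" "\<And>c. chi (contr_hyp c) j = 0"
    using supp[of j] by (auto simp: contr_hyp_def chi_def)
  then show ?thesis by simp
next
  case True
  then obtain c0 where j: "j = code c0" by auto
  have outside: "x (code c) = 0" if "c \<notin> contr_labels" "c \<notin> Row ` {..<m}" for c
    using supp[of "code c"] that by (simp add: inj_image_mem_iff[OF inj_code])
  have "x (code c0) = (\<Sum>c\<in>{c\<in>contr_labels. c0 \<in> contr_coords c}. kernel_coeff x c)"
  proof (cases c0)
    case (Row i)
    show ?thesis
    proof (cases "i < m")
      case True
      have "(\<Sum>c\<in>Pos i ` {..<K}. kernel_coeff x c) = (\<Sum>k<K. kernel_coeff x (Pos i k))"
        by (simp add: sum.reindex inj_on_def)
      also have "\<dots> = (\<Sum>k<K. x (code (Pos i k))) - (\<Sum>k<K. x (code (Neg i k)))"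
        by (simp add: kernel_coeff_def sum_subtractf)
      also have "\<dots> = x (code (Row i))" using Lx[OF True] by (simp add: L_def)
      finally show ?thesis using True Row by (simp add: contr_labels_containing)
    next
      case False
      moreover have "Row i \<notin> contr_labels" by (auto simp: contr_labels_def)
      ultimately show ?thesis using Row outside[of c0] by (auto simp: contr_labels_containing)
    qed
  next
    case (Pos i k)
    show ?thesis
      unfolding Pos contr_labels_containing using outside[of c0] Pos
      by (auto simp: kernel_coeff_def contr_labels_def)
  next
    case (Neg i k)
    show ?thesis
      unfolding Neg contr_labels_containing using outside[of c0] Neg
      by (auto simp: kernel_coeff_def contr_labels_def)
  next
    case (Tag l)
    show ?thesis
      unfolding Tag contr_labels_containing using outside[of c0] Tag
      by (auto simp: kernel_coeff_def contr_labels_def)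
  next
    case (Tag' l)
    show ?thesis
      unfolding Tag' contr_labels_containing using outside[of c0] Tag'
      by (auto simp: kernel_coeff_def contr_labels_def)
  qed
  then show ?thesis unfolding j sum_contr_hyp .
qed

lemma inj_on_elem_hyp: "inj_on elem_hyp E"
proof (rule inj_onI)
  fix e e' assume e: "e \<in> E" "e' \<in> E" and "elem_hyp e = elem_hyp e'"
  then have "elem_coords e = elem_coords e'"
    unfolding elem_hyp_def by (simp add: inj_image_eq_iff[OF inj_code])
  moreover have "Tag (idx e) \<in> elem_coords e" by (simp add: elem_coords_def)
  ultimately have "Tag (idx e) \<in> elem_coords e'" by simp
  then have "idx e = idx e'" by (auto simp: elem_coords_def)
  then show "e = e'" using inj_idx e by (auto dest: inj_onD)
qed

text \<open>This is what Tag' is for: without it the hyperplane of a zero vector w e would be the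
  contracted hyperplane with support Tag (idx e).\<close>
lemma elem_hyp_not_contr_hyp: "elem_hyp e \<notin> contr_hyp ` C"
proof
  assume "elem_hyp e \<in> contr_hyp ` C"
  then obtain c where "elem_coords e = contr_coords c"
    unfolding elem_hyp_def contr_hyp_def by (auto simp: inj_image_eq_iff[OF inj_code])
  then have "Tag (idx e) \<in> contr_coords c" "Tag' (idx e) \<in> contr_coords c"
    by (auto simp: elem_coords_def)
  then show False by (cases c) auto
qed

lemma elem_combination_in_span:
  assumes T: "T \<subseteq> E" and Lx: "\<And>i. L (\<lambda>j. \<Sum>A\<in>elem_hyp ` T. b A * chi A j) i = 0"
  shows "\<exists>a. \<forall>j. (\<Sum>A\<in>elem_hyp ` T. b A * chi A j) = (\<Sum>A\<in>contr_hyp ` contr_labels. a A * chi A j)"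
proof -
  define x where "x j = (\<Sum>A\<in>elem_hyp ` T. b A * chi A j)" for j
  have supp: "x j = 0" if "j \<notin> code ` (contr_labels \<union> Row ` {..<m})" for j
  proof -
    have "j \<notin> elem_hyp e" if "e \<in> T" for e
      using elem_coords_subset[of e] T \<open>e \<in> T\<close> \<open>j \<notin> _\<close> unfolding elem_hyp_def by auto
    then show ?thesis unfolding x_def chi_def by (auto intro!: sum.neutral)
  qed
  have Lx_zero: "L x i = 0" for i
    using Lx unfolding x_def[abs_def] .
  have "x j = (\<Sum>c\<in>contr_labels. kernel_coeff x c * chi (contr_hyp c) j)" for j
    by (rule kernel_in_span[OF supp Lx_zero])
  also have "\<dots> j = (\<Sum>A\<in>contr_hyp ` contr_labels. kernel_coeff x (inv contr_hyp A) * chi A j)" for j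
    by (simp add: sum.reindex inj_on_subset[OF inj_contr_hyp subset_UNIV] inv_f_f[OF inj_contr_hyp])
  finally have "x j = (\<Sum>A\<in>contr_hyp ` contr_labels. kernel_coeff x (inv contr_hyp A) * chi A j)"
    for j .
  then have "\<exists>a. \<forall>j. x j = (\<Sum>A\<in>contr_hyp ` contr_labels. a A * chi A j)"
    by (intro exI[of _ "\<lambda>A. kernel_coeff x (inv contr_hyp A)"] allI)
  then show ?thesis unfolding x_def .
qed

lemma lin_indep_elem_hyps_iff:
  assumes T: "T \<subseteq> E"
  shows "lin_indep_fam chi (elem_hyp ` T \<union> contr_hyp ` contr_labels) \<longleftrightarrow> lin_indep_fam w T"
proof -
  have inj_T: "inj_on elem_hyp T" using inj_on_elem_hyp T by (rule inj_on_subset)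
  have "lin_indep_fam chi (elem_hyp ` T \<union> contr_hyp ` contr_labels) \<longleftrightarrow>
      lin_indep_fam (\<lambda>A. L (chi A)) (elem_hyp ` T)"
  proof (rule lin_indep_fam_union_iff_image)
    show "finite (elem_hyp ` T)" using T finite_E finite_subset by blast
    show "elem_hyp ` T \<inter> contr_hyp ` contr_labels = {}" using elem_hyp_not_contr_hyp by blast
    show "L (chi A) i = 0" if "A \<in> contr_hyp ` contr_labels" for A i
      using that L_contr_hyp by blast
    show "L (\<lambda>j. \<Sum>t\<in>F. b t * f t j) i = (\<Sum>t\<in>F. b t * L (f t) i)" for F b f i
      by (rule L_sum)
    show "\<exists>a. \<forall>j. (\<Sum>A\<in>elem_hyp ` T. b A * chi A j) = (\<Sum>A\<in>contr_hyp ` contr_labels. a A * chi A j)"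
      if "\<And>i. L (\<lambda>j. \<Sum>A\<in>elem_hyp ` T. b A * chi A j) i = 0" for b
      using elem_combination_in_span[OF T that] .
  qed (use finite_contr_labels lin_indep_contr_hyps in simp_all)
  also have "\<dots> \<longleftrightarrow> lin_indep_fam (\<lambda>e. L (chi (elem_hyp e))) T"
    by (rule lin_indep_fam_image[OF inj_T])
  also have "\<dots> \<longleftrightarrow> lin_indep_fam w T"
    using T by (intro lin_indep_fam_cong) (auto simp: L_elem_hyp)
  finally show ?thesis .
qed

definition N :: nat where
  "N = Max (insert 1 (code ` (contr_labels \<union> Row ` {..<m})))"

lemma one_le_N: "1 \<le> N"
  using finite_contr_labels by (simp add: N_def)

lemma code_subset_interval:
  assumes "A \<subseteq> contr_labels \<union> Row ` {..<m}"
  shows "code ` A \<subseteq> {1..N}"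
proof
  fix j assume "j \<in> code ` A"
  then obtain c where "c \<in> A" "j = code c" by auto
  then have "j \<le> N"
    unfolding N_def using assms finite_contr_labels by (intro Max_ge) auto
  moreover have "1 \<le> j" using \<open>j = code c\<close> by (simp add: code_def)
  ultimately show "j \<in> {1..N}" by simp
qed

lemma contr_hyp_in_ground:
  assumes "c \<in> contr_labels"
  shows "contr_hyp c \<in> fst (resonance_matroid N)"
proof -
  have "contr_hyp c \<subseteq> {1..N}"
    unfolding contr_hyp_def using contr_coords_subset[OF assms] by (rule code_subset_interval)
  moreover have "contr_hyp c \<noteq> {}" by (cases c) (simp_all add: contr_hyp_def)
  ultimately show ?thesis by (simp add: resonance_matroid_def)
qed

lemma elem_hyp_in_ground:
  assumes "e \<in> E"
  shows "elem_hyp e \<in> fst (resonance_matroid N)"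
proof -
  have "elem_hyp e \<subseteq> {1..N}"
    unfolding elem_hyp_def using elem_coords_subset[OF assms] by (intro code_subset_interval) blast
  moreover have "elem_hyp e \<noteq> {}" by (simp add: elem_hyp_def elem_coords_def)
  ultimately show ?thesis by (simp add: resonance_matroid_def)
qed

lemma resonance_minor:
  "\<exists>M'. is_minor M' (resonance_matroid N) \<and> matroid_iso (E, \<lambda>S. S \<subseteq> E \<and> lin_indep_fam w S) M'"
proof -
  define C where "C = contr_hyp ` contr_labels"
  define M' where "M' = restriction (contraction (resonance_matroid N) C) (elem_hyp ` E)"
  have C_indep: "snd (resonance_matroid N) C"
    using contr_hyp_in_ground lin_indep_contr_hyps
    by (auto simp: C_def resonance_matroid_def)
  have elem_hyps: "elem_hyp ` E \<subseteq> fst (resonance_matroid N) - C"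
    using elem_hyp_in_ground elem_hyp_not_contr_hyp by (auto simp: C_def)
  have "is_minor M' (resonance_matroid N)"
    unfolding M'_def using C_indep elem_hyps by (rule is_minor_restriction_contraction)
  moreover have "matroid_iso (E, \<lambda>S. S \<subseteq> E \<and> lin_indep_fam w S) M'"
    unfolding matroid_iso_def
  proof (intro exI[of _ elem_hyp] conjI allI impI)
    show "bij_betw elem_hyp (fst (E, \<lambda>S. S \<subseteq> E \<and> lin_indep_fam w S)) (fst M')"
      using inj_on_elem_hyp by (simp add: M'_def restriction_def inj_on_imp_bij_betw)
  next
    fix S assume "S \<subseteq> fst (E, \<lambda>S. S \<subseteq> E \<and> lin_indep_fam w S)"
    then have S: "S \<subseteq> E" by simp
    have "snd M' (elem_hyp ` S) \<longleftrightarrow> snd (resonance_matroid N) (elem_hyp ` S \<union> C)"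
      using S elem_hyps by (auto simp: M'_def restriction_def contraction_def)
    also have "\<dots> \<longleftrightarrow> lin_indep_fam chi (elem_hyp ` S \<union> C)"
      using S elem_hyps C_indep by (auto simp: resonance_matroid_def)
    also have "\<dots> \<longleftrightarrow> lin_indep_fam w S"
      unfolding C_def by (rule lin_indep_elem_hyps_iff[OF S])
    finally show "snd (E, \<lambda>S. S \<subseteq> E \<and> lin_indep_fam w S) S \<longleftrightarrow> snd M' (elem_hyp ` S)"
      using S by simp
  qed
  ultimately show ?thesis by blast
qed

end

lemma integer_matrix_matroid_is_resonance_minor:
  fixes W :: "'a \<Rightarrow> nat \<Rightarrow> int"
  assumes "finite E" and W_zero: "\<And>e i. e \<in> E \<Longrightarrow> m \<le> i \<Longrightarrow> W e i = 0"
  shows "\<exists>N\<ge>1. \<exists>M'. is_minor M' (resonance_matroid N) \<and>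
           matroid_iso (E, \<lambda>S. S \<subseteq> E \<and> lin_indep_fam (\<lambda>e i. of_int (W e i)) S) M'"
proof -
  define K where "K = Max (insert 0 ((\<lambda>(e, i). nat \<bar>W e i\<bar>) ` (E \<times> {..<m})))"
  have W_bound: "\<bar>W e i\<bar> \<le> int K" if "e \<in> E" for e i
  proof (cases "i < m")
    case True
    then have "nat \<bar>W e i\<bar> \<le> K"
      unfolding K_def using \<open>finite E\<close> that by (intro Max_ge) (auto intro!: image_eqI[of _ _ "(e, i)"])
    then show ?thesis by simp
  qed (use W_zero[OF that] in simp)
  obtain idx :: "'a \<Rightarrow> nat" and n where "inj_on idx E" "idx ` E = {..<n}"
    using finite_imp_inj_to_nat_seg[OF \<open>finite E\<close>] by blast
  interpret integral_configuration E idx W m K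
    using \<open>finite E\<close> \<open>inj_on idx E\<close> W_bound W_zero by unfold_locales
  show ?thesis
    using one_le_N resonance_minor unfolding w_def by blast
qed

lemma representable_Q_integer_matrix:
  assumes "representable_Q M"
  obtains m and W :: "'a \<Rightarrow> nat \<Rightarrow> int" where "finite (fst M)"
    "\<And>e i. e \<in> fst M \<Longrightarrow> m \<le> i \<Longrightarrow> W e i = 0"
    "\<And>S. snd M S \<longleftrightarrow> S \<subseteq> fst M \<and> lin_indep_fam (\<lambda>e i. of_int (W e i)) S"
proof -
  obtain v :: "'a \<Rightarrow> nat \<Rightarrow> rat" and m where fin: "finite (fst M)"
    and v_zero: "\<And>e i. e \<in> fst M \<Longrightarrow> m \<le> i \<Longrightarrow> v e i = 0"
    and indep: "\<And>S. snd M S \<longleftrightarrow> S \<subseteq> fst M \<and> lin_indep_fam v S"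
    using assms unfolding representable_Q_def by blast
  obtain d W where "d \<noteq> 0" and W: "\<And>e i. e \<in> fst M \<Longrightarrow> of_int (W e i) = d * v e i"
    using rational_vectors_integral_multiple[where E = "fst M" and m = m and v = v, OF fin v_zero]
    by blast
  have "lin_indep_fam (\<lambda>e i. of_int (W e i)) S \<longleftrightarrow> lin_indep_fam v S" if "S \<subseteq> fst M" for S
  proof -
    have "lin_indep_fam (\<lambda>e i. of_int (W e i)) S \<longleftrightarrow> lin_indep_fam (\<lambda>e i. d * v e i) S"
      using that W by (intro lin_indep_fam_cong) auto
    also have "\<dots> \<longleftrightarrow> lin_indep_fam v S"
      using \<open>d \<noteq> 0\<close> by (rule lin_indep_fam_scale)
    finally show ?thesis .
  qed
  then have "snd M S \<longleftrightarrow> S \<subseteq> fst M \<and> lin_indep_fam (\<lambda>e i. of_int (W e i)) S" for S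
    using indep by blast
  moreover have "W e i = 0" if "e \<in> fst M" "m \<le> i" for e i
    using W[OF that(1), of i] v_zero[OF that] by simp
  ultimately show ?thesis using that[OF fin] by blast
qed

theorem theorem1p1:
  fixes M :: "'a matroid"
  assumes "representable_Q M"
  shows "\<exists>N::nat. N \<ge> 1 \<and> (\<exists>M'. is_minor M' (resonance_matroid N) \<and> matroid_iso M M')"
proof -
  obtain m and W :: "'a \<Rightarrow> nat \<Rightarrow> int" where fin: "finite (fst M)"
    and W_zero: "\<And>e i. e \<in> fst M \<Longrightarrow> m \<le> i \<Longrightarrow> W e i = 0"
    and indep: "\<And>S. snd M S \<longleftrightarrow> S \<subseteq> fst M \<and> lin_indep_fam (\<lambda>e i. of_int (W e i)) S"
    using representable_Q_integer_matrix[OF assms] by blast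
  have M: "(fst M, \<lambda>S. S \<subseteq> fst M \<and> lin_indep_fam (\<lambda>e i. of_int (W e i)) S) = M"
    using indep by (intro prod_eqI ext) auto
  show ?thesis
    using integer_matrix_matroid_is_resonance_minor[where W = W and m = m, OF fin W_zero]
    unfolding M .
qed

end
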